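(* For every $\varepsilon\in(0,1]$ there exists $b_0$ such that for every $b\geq b_0$ there exists $\gamma_0>0$ such that for every $\gamma\in(0,\gamma_0]$ there exists $n_0$ such that for every $n\geq n_0$ the following holds. Let $\Delta:=e^{\gamma\sqrt{\ln n}}$, let $G$ be an $(n,\varepsilon)$-digraph, let $\mathbf{x}$ be a $b$-normal perfect fractional matching of $G$, and let $v_0\in V(G)$. Let $Q=(r_0,\ldots,r_m)$ be an oriented tree with $n^{1/4}+1\leq|Q|\leq3\Delta n^{1/4}$ and $\Delta(Q)\leq\Delta$, and let $R=(R_0,\ldots,R_m)$ be a random tree in $G$ according to $Q$ and $\mathbf{x}$ with $R_0=v_0$. Then $H(R)\geq(1-2e^{-\sqrt{\ln n}})\frac mnh(\mathbf{x})$.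
   Context: $\log=\log_2$, $\ln$ natural logarithm. $H(R)=-\sum_r\mathbb{P}[R=r]\log\mathbb{P}[R=r]$ is the entropy of the random vector $R$. Digraphs have no loops and at most one edge from $v$ to $w$ per ordered pair. An $(n,\varepsilon)$-digraph is a digraph on $n$ vertices with every in- and out-degree at least $(\frac12+\varepsilon)n$. A perfect fractional matching of $G$ is $\mathbf{x}\colon E(G)\to\mathbb{R}_{\geq0}$ with $\sum_{w\in N^+(v)}\mathbf{x}_{vw}=1=\sum_{w\in N^-(v)}\mathbf{x}_{wv}$ for all $v$; it is $b$-normal if $\frac1{bn}\leq\mathbf{x}_e\leq\frac bn$ for all $e$; $h(\mathbf{x})=\sum_e\mathbf{x}_e\log\frac1{\mathbf{x}_e}$. $Q=(r_0,\ldots,r_m)$ is $Q$ rooted at $r_0$ with a breadth-first ordering; $\Delta(Q)$ is the max degree of the underlying tree. A random tree according to $Q$ and $\mathbf{x}$ with $R_0=v_0$ is a random vector $R=(R_0,\dots,R_m)$ with $R_0=v_0$ and, for each $j\geq1$ with parent $r_i$ of $r_j$, conditionally on $R_i=v$ and on the values of all $R_{i'}$ with $r_{i'}$ not a descendant of $r_j$ and $i'\neq i$, $R_j=w$ with probability $\mathbf{x}_{vw}$ if $r_ir_j\in E(Q)$, $vw\in E(G)$; $\mathbf{x}_{wv}$ if $r_jr_i\in E(Q)$, $wv\in E(G)$; $0$ otherwise. *)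

theory Defs
  imports "HOL-Probability.Probability"
begin

definition digraph :: "nat set \<Rightarrow> (nat \<times> nat) set \<Rightarrow> bool" where
  "digraph V E \<longleftrightarrow> finite V \<and> E \<subseteq> V \<times> V \<and> (\<forall>v. (v, v) \<notin> E)"

definition out_nbrs :: "nat set \<Rightarrow> (nat \<times> nat) set \<Rightarrow> nat \<Rightarrow> nat set" where
  "out_nbrs V E v = {w \<in> V. (v, w) \<in> E}"

definition in_nbrs :: "nat set \<Rightarrow> (nat \<times> nat) set \<Rightarrow> nat \<Rightarrow> nat set" where
  "in_nbrs V E v = {w \<in> V. (w, v) \<in> E}"

definition n_eps_digraph :: "nat \<Rightarrow> real \<Rightarrow> nat set \<Rightarrow> (nat \<times> nat) set \<Rightarrow> bool" where
  "n_eps_digraph n \<epsilon> V E \<longleftrightarrow> digraph V E \<and> card V = n \<and>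
     (\<forall>v\<in>V. real (card (out_nbrs V E v)) \<ge> (1/2 + \<epsilon>) * real n \<and>
             real (card (in_nbrs V E v)) \<ge> (1/2 + \<epsilon>) * real n)"

definition perfect_frac_matching ::
  "nat set \<Rightarrow> (nat \<times> nat) set \<Rightarrow> (nat \<times> nat \<Rightarrow> real) \<Rightarrow> bool" where
  "perfect_frac_matching V E x \<longleftrightarrow> (\<forall>e\<in>E. x e \<ge> 0) \<and>
     (\<forall>v\<in>V. (\<Sum>w\<in>out_nbrs V E v. x (v, w)) = 1 \<and> (\<Sum>w\<in>in_nbrs V E v. x (w, v)) = 1)"

definition b_normal :: "real \<Rightarrow> nat \<Rightarrow> (nat \<times> nat) set \<Rightarrow> (nat \<times> nat \<Rightarrow> real) \<Rightarrow> bool" where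
  "b_normal b n E x \<longleftrightarrow> (\<forall>e\<in>E. 1 / (b * real n) \<le> x e \<and> x e \<le> b / real n)"

definition h_frac :: "(nat \<times> nat) set \<Rightarrow> (nat \<times> nat \<Rightarrow> real) \<Rightarrow> real" where
  "h_frac E x = (\<Sum>e\<in>E. x e * log 2 (1 / x e))"

text \<open>An oriented tree Q = (r_0,...,r_m) rooted at r_0 in breadth-first order is encoded by the
  parent map par (par j < j for 1 \<le> j \<le> m, par nondecreasing on {1..m}: breadth-first order)
  and orientations dir: dir j means the edge r_{par j} r_j of Q is oriented from the parent to
  r_j; otherwise it is r_j r_{par j}.\<close>

definition bfs_tree :: "nat \<Rightarrow> (nat \<Rightarrow> nat) \<Rightarrow> bool" where
  "bfs_tree m par \<longleftrightarrow> (\<forall>j\<in>{1..m}. par j < j) \<and>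
     (\<forall>j\<in>{1..m}. \<forall>k\<in>{1..m}. j \<le> k \<longrightarrow> par j \<le> par k)"

definition tree_deg :: "nat \<Rightarrow> (nat \<Rightarrow> nat) \<Rightarrow> nat \<Rightarrow> nat" where
  "tree_deg m par i = card {j\<in>{1..m}. par j = i} + (if i = 0 then 0 else 1)"

definition tree_maxdeg :: "nat \<Rightarrow> (nat \<Rightarrow> nat) \<Rightarrow> nat" where
  "tree_maxdeg m par = Max (tree_deg m par ` {0..m})"

definition descendant :: "(nat \<Rightarrow> nat) \<Rightarrow> nat \<Rightarrow> nat \<Rightarrow> bool" where
  "descendant par j i \<longleftrightarrow> (\<exists>k. (par ^^ k) i = j)"

definition tree_trans ::
  "(nat \<times> nat) set \<Rightarrow> (nat \<times> nat \<Rightarrow> real) \<Rightarrow> (nat \<Rightarrow> bool) \<Rightarrow> nat \<Rightarrow> nat \<Rightarrow> nat \<Rightarrow> real" where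
  "tree_trans E x dir j v w =
     (if dir j then (if (v, w) \<in> E then x (v, w) else 0)
      else (if (w, v) \<in> E then x (w, v) else 0))"

text \<open>R is a random vector (R_0,...,R_m), modelled as a pmf on lists of length m+1.
  It is a random tree according to Q and x with R_0 = v0 if R_0 = v0 almost surely and,
  for every j in {1..m}, conditionally on any (positive-probability) assignment of the values
  of all R_i' with r_i' not a descendant of r_j (this includes the parent), R_j = w with the
  prescribed probability.\<close>
definition random_tree ::
  "(nat \<times> nat) set \<Rightarrow> (nat \<times> nat \<Rightarrow> real) \<Rightarrow> nat \<Rightarrow> (nat \<Rightarrow> nat) \<Rightarrow> (nat \<Rightarrow> bool) \<Rightarrow> nat
     \<Rightarrow> nat list pmf \<Rightarrow> bool" where
  "random_tree E x m par dir v0 R \<longleftrightarrow>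
     (\<forall>r\<in>set_pmf R. length r = m + 1) \<and>
     measure_pmf.prob R {r. r ! 0 = v0} = 1 \<and>
     (\<forall>j\<in>{1..m}. \<forall>a :: nat \<Rightarrow> nat. \<forall>w.
        let N = {i\<in>{0..m}. \<not> descendant par j i};
            B = {r. \<forall>i\<in>N. r ! i = a i}
        in measure_pmf.prob R B > 0 \<longrightarrow>
           measure_pmf.prob R (B \<inter> {r. r ! j = w}) / measure_pmf.prob R B
             = tree_trans E x dir j (a (par j)) w)"

definition entropy2 :: "'b pmf \<Rightarrow> real" where
  "entropy2 R = - (\<Sum>r\<in>set_pmf R. pmf R r * log 2 (pmf R r))"

end

theory Submission
  imports Defs
begin

(* Because r_0, ..., r_m are listed in breadth-first order, every r_i with i < j is a
   non-descendant of r_j, so the defining property of R gives the chain rule: the law of R is the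
   product of the transition weights along the edges of Q, and H(R) is the sum, over the edges
   r_(par k) r_k, of the entropy of the transition row at R_(par k) averaged over the law of
   R_(par k). Summed over all rows these entropies give h(x).
   The law of R_k is that of R_(par k) pushed through the transition matrix, and any two columns of
   this matrix share mass at least 2 eps / b (both endpoints have more than n/2 neighbours, each of
   weight at least 1/(bn)). Hence the oscillation of the marginals contracts by the factor
   1 - 2 eps / b per level, so below depth D ~ (sqrt (ln n) + ln b) b / (2 eps) every marginal is at
   least (1 - e^(-sqrt (ln n))) / n and the edge contributes at least (1 - e^(-sqrt (ln n))) h(x) / n.
   As gamma is small compared with eps / b, the at most (D + 2) Delta^(D + 1) vertices above that
   depth form a fraction at most e^(-sqrt (ln n)) of m >= n^(1/4). *)

lemma oscillation_contraction:
  fixes \<mu> :: "'a \<Rightarrow> real" and t :: "'a \<Rightarrow> 'b \<Rightarrow> real"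
  assumes fin: "finite V"
    and osc: "\<forall>u\<in>V. \<forall>v\<in>V. \<mu> u - \<mu> v \<le> Osc"
    and col_w: "(\<Sum>u\<in>V. t u w) = 1" and col_w': "(\<Sum>u\<in>V. t u w') = 1"
    and overlap: "(\<Sum>u\<in>V. min (t u w) (t u w')) \<ge> c"
  shows "(\<Sum>u\<in>V. \<mu> u * t u w) - (\<Sum>u\<in>V. \<mu> u * t u w') \<le> Osc * (1 - c)"
proof -
  have ne: "V \<noteq> {}" using col_w by auto
  define M where "M = Max (\<mu> ` V)"
  define M' where "M' = Min (\<mu> ` V)"
  define s where "s = (\<lambda>u. min (t u w) (t u w'))"
  define S where "S = (\<Sum>u\<in>V. s u)"
  have le_M: "\<mu> u \<le> M" and ge_M': "M' \<le> \<mu> u" if "u \<in> V" for u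
    unfolding M_def M'_def using fin that by simp_all
  have "M \<in> \<mu> ` V" "M' \<in> \<mu> ` V" unfolding M_def M'_def using fin ne by simp_all
  then have "M - M' \<le> Osc" using osc by blast
  moreover have "S \<le> 1"
    unfolding S_def s_def by (rule order_trans[OF sum_mono col_w[THEN eq_refl]]) simp
  ultimately have osc_S: "(M - M') * (1 - S) \<le> Osc * (1 - S)"
    by (intro mult_right_mono) auto
  have "0 \<le> Osc" using osc ne by fastforce
  then have osc_c: "Osc * (1 - S) \<le> Osc * (1 - c)"
    using overlap unfolding S_def s_def by (intro mult_left_mono) auto
  have split: "(\<Sum>u\<in>V. \<mu> u * t u v) = (\<Sum>u\<in>V. \<mu> u * s u) + (\<Sum>u\<in>V. \<mu> u * (t u v - s u))"
    for v by (simp add: sum.distrib[symmetric] algebra_simps)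
  have "(\<Sum>u\<in>V. \<mu> u * (t u w - s u)) \<le> (\<Sum>u\<in>V. M * (t u w - s u))"
    by (intro sum_mono mult_right_mono) (auto simp: le_M s_def)
  also have "\<dots> = M * (1 - S)"
    by (simp only: sum_distrib_left[symmetric] sum_subtractf col_w S_def)
  finally have upper: "(\<Sum>u\<in>V. \<mu> u * (t u w - s u)) \<le> M * (1 - S)" .
  have "M' * (1 - S) = (\<Sum>u\<in>V. M' * (t u w' - s u))"
    by (simp only: sum_distrib_left[symmetric] sum_subtractf col_w' S_def)
  also have "\<dots> \<le> (\<Sum>u\<in>V. \<mu> u * (t u w' - s u))"
    by (intro sum_mono mult_right_mono) (auto simp: ge_M' s_def)
  finally have lower: "M' * (1 - S) \<le> (\<Sum>u\<in>V. \<mu> u * (t u w' - s u))" .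
  have "(\<Sum>u\<in>V. \<mu> u * t u w) - (\<Sum>u\<in>V. \<mu> u * t u w') \<le> (M - M') * (1 - S)"
    using split[of w] split[of w'] upper lower by (simp add: algebra_simps)
  then show ?thesis using osc_S osc_c by linarith
qed

lemma scaled_power_le_exp:
  fixes b c s :: real
  assumes c: "0 < c" "c \<le> 1" and b: "0 < b" and D: "(s + ln b) / c \<le> real D"
  shows "b * (1 - c) ^ D \<le> exp (- s)"
proof -
  have "(1 - c) ^ D \<le> exp (- c) ^ D"
    using exp_ge_add_one_self[of "-c"] c by (intro power_mono) auto
  also have "\<dots> = exp (- (real D * c))" by (simp add: exp_of_nat_mult[symmetric])
  also have "\<dots> \<le> exp (- (s + ln b))"
    using D c by (simp add: divide_le_eq)
  also have "\<dots> = exp (- s) / b" using b by (simp add: exp_diff exp_minus field_simps)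
  finally show ?thesis using b by (simp add: field_simps)
qed

(* The threshold on s makes s^2/4 - s dominate T + T gamma s for T = (s + ln b)/c + 3 >= D + 2. *)
lemma count_times_exp_power_le:
  fixes b c \<gamma> s :: real
  assumes c: "0 < c" "c \<le> 1" and b: "1 \<le> b" and \<gamma>: "0 \<le> \<gamma>" "\<gamma> \<le> c / 16"
    and D: "real D \<le> (s + ln b) / c + 1"
    and s: "16 / 3 * (4 + 1 / c + (ln b + 3) / 16 + ln b / c) \<le> s"
  shows "(real D + 2) * exp (\<gamma> * s) ^ (D + 1) \<le> exp (s * s / 4 - s)"
proof -
  have lnb: "ln b \<ge> 0" using b by simp
  define K where "K = 4 + 1 / c + (ln b + 3) / 16 + ln b / c"
  have "0 \<le> 1 / c" "0 \<le> ln b / c" "0 \<le> (ln b + 3) / 16" using c lnb by simp_all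
  then have "4 \<le> K" unfolding K_def by linarith
  then have s1: "s \<ge> 1" using s unfolding K_def[symmetric] by linarith
  define T where "T = (s + ln b) / c + 3"
  have T0: "T \<ge> 0" unfolding T_def using s1 lnb c by simp
  have "exp (\<gamma> * s) ^ (D + 1) = exp (real (D + 1) * (\<gamma> * s))" by (rule exp_of_nat_mult[symmetric])
  also have "\<dots> \<le> exp (T * (\<gamma> * s))"
    using D \<gamma> s1 unfolding T_def by (intro exp_mono mult_right_mono) auto
  finally have power_le: "exp (\<gamma> * s) ^ (D + 1) \<le> exp (T * (\<gamma> * s))" .
  have "real D + 2 \<le> T" using D unfolding T_def by simp
  also have "T \<le> exp T" using exp_ge_add_one_self[of T] by linarith
  finally have count_le: "real D + 2 \<le> exp T" .
  have "T + T * (\<gamma> * s) \<le> s * s / 4 - s"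
  proof -
    have "T * (\<gamma> * s) \<le> T * (c / 16 * s)" using T0 \<gamma> s1 by (intro mult_left_mono) auto
    also have "\<dots> = s * s / 16 + s * ln b / 16 + 3 * (c * s) / 16"
      unfolding T_def using c by (simp add: field_simps)
    also have "\<dots> \<le> s * s / 16 + s * ln b / 16 + 3 * s / 16" using c s1 by simp
    finally have "T * (\<gamma> * s) \<le> s * s / 16 + s * ln b / 16 + 3 * s / 16" .
    moreover have "1 * (ln b / c + 3) \<le> s * (ln b / c + 3)"
      using s1 lnb c by (intro mult_right_mono) auto
    then have "ln b / c + 3 \<le> s * (ln b / c) + 3 * s" by (simp add: algebra_simps)
    moreover have "s * K \<le> s * (3 * s / 16)"
      using s s1 unfolding K_def[symmetric] by (intro mult_left_mono) auto
    then have "4 * s + s / c + s * ln b / 16 + 3 * s / 16 + s * (ln b / c) \<le> 3 * (s * s) / 16"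
      unfolding K_def by (simp add: algebra_simps add_divide_distrib)
    moreover have "T = s / c + ln b / c + 3" unfolding T_def by (simp add: add_divide_distrib)
    ultimately show ?thesis by linarith
  qed
  then have "exp T * exp (T * (\<gamma> * s)) \<le> exp (s * s / 4 - s)" by (simp flip: exp_add)
  moreover have "(real D + 2) * exp (\<gamma> * s) ^ (D + 1) \<le> exp T * exp (T * (\<gamma> * s))"
    using power_le count_le by (intro mult_mono) auto
  ultimately show ?thesis by linarith
qed

lemma exists_depth:
  fixes b c \<gamma> s :: real
  assumes c: "0 < c" "c \<le> 1" and b: "1 \<le> b" and \<gamma>: "0 \<le> \<gamma>" "\<gamma> \<le> c / 16"
    and s: "16 / 3 * (4 + 1 / c + (ln b + 3) / 16 + ln b / c) \<le> s"
  obtains D :: nat where "b * (1 - c) ^ D \<le> exp (- s)"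
    and "(real D + 2) * exp (\<gamma> * s) ^ (D + 1) \<le> exp (s * s / 4 - s)"
proof
  define D where "D = nat \<lceil>(s + ln b) / c\<rceil>"
  have "0 \<le> 16 / 3 * (4 + 1 / c + (ln b + 3) / 16 + ln b / c)"
    using c b by (intro mult_nonneg_nonneg add_nonneg_nonneg) auto
  then have "0 \<le> s" using s by linarith
  then have "0 \<le> (s + ln b) / c" using c b by simp
  then have D: "(s + ln b) / c \<le> real D" "real D \<le> (s + ln b) / c + 1"
    unfolding D_def by linarith+
  show "b * (1 - c) ^ D \<le> exp (- s)"
    using c b D(1) by (intro scaled_power_le_exp) auto
  show "(real D + 2) * exp (\<gamma> * s) ^ (D + 1) \<le> exp (s * s / 4 - s)"
    by (rule count_times_exp_power_le[OF c b \<gamma> D(2) s])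
qed

primrec tree_level :: "nat \<Rightarrow> (nat \<Rightarrow> nat) \<Rightarrow> nat \<Rightarrow> nat set" where
  "tree_level m par 0 = {0}"
| "tree_level m par (Suc d) = {j\<in>{1..m}. par j \<in> tree_level m par d}"

lemma tree_level_subset: "tree_level m par d \<subseteq> {0..m}"
  by (induction d) auto

lemma tree_level_exists:
  assumes "\<forall>j\<in>{1..m}. par j < j" and "k \<le> m"
  shows "\<exists>d. k \<in> tree_level m par d"
  using assms(2)
proof (induction k rule: less_induct)
  case (less k)
  show ?case
  proof (cases "k = 0")
    case True then show ?thesis by (intro exI[of _ 0]) simp
  next
    case False
    then have k: "k \<in> {1..m}" using less.prems by auto
    then obtain d where "par k \<in> tree_level m par d" using less assms(1) by force
    then show ?thesis using k by (intro exI[of _ "Suc d"]) simp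
  qed
qed

lemma card_tree_level_le:
  assumes \<Delta>: "\<Delta> \<ge> 1" "real (tree_maxdeg m par) \<le> \<Delta>"
  shows "real (card (tree_level m par d)) \<le> \<Delta> ^ d"
proof (induction d)
  case 0 then show ?case by simp
next
  case (Suc d)
  let ?children = "\<lambda>i. {j\<in>{1..m}. par j = i}"
  have children_le: "real (card (?children i)) \<le> \<Delta>" if "i \<in> tree_level m par d" for i
  proof -
    have "i \<in> {0..m}" using tree_level_subset that by blast
    then have "tree_deg m par i \<le> tree_maxdeg m par" unfolding tree_maxdeg_def by simp
    then have "card (?children i) \<le> tree_maxdeg m par" unfolding tree_deg_def by linarith
    then show ?thesis using \<Delta> by linarith
  qed
  have "tree_level m par (Suc d) = (\<Union>i\<in>tree_level m par d. ?children i)" by auto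
  then have "card (tree_level m par (Suc d)) \<le> (\<Sum>i\<in>tree_level m par d. card (?children i))"
    by (simp add: card_UN_le finite_subset[OF tree_level_subset])
  then have "real (card (tree_level m par (Suc d))) \<le> (\<Sum>i\<in>tree_level m par d. real (card (?children i)))"
    by (metis of_nat_le_iff of_nat_sum)
  also have "\<dots> \<le> real (card (tree_level m par d)) * \<Delta>"
    using sum_mono[OF children_le] by simp
  also have "\<dots> \<le> \<Delta> ^ d * \<Delta>" using Suc.IH \<Delta> by (intro mult_right_mono) auto
  finally show ?case by (simp add: mult.commute)
qed

lemma funpow_par_reaches_root:
  fixes par :: "nat \<Rightarrow> nat"
  assumes "\<forall>j\<in>{1..m}. par j < j" and "i \<le> m"
  shows "\<exists>t. (par ^^ t) i = 0"
  using assms(2)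
proof (induction i rule: less_induct)
  case (less i)
  show ?case
  proof (cases "i = 0")
    case True then show ?thesis by (intro exI[of _ 0]) simp
  next
    case False
    then have "par i < i" using assms(1) less.prems by auto
    then obtain t where "(par ^^ t) (par i) = 0" using less by auto
    then have "(par ^^ Suc t) i = 0" by (simp add: funpow_Suc_right del: funpow.simps)
    then show ?thesis by blast
  qed
qed

lemma funpow_par_increase_through_root:
  fixes par :: "nat \<Rightarrow> nat"
  assumes "\<forall>j\<in>{1..m}. par j < j" and "(par ^^ t) i = j" and "i < j" and "j \<le> m"
  shows "\<exists>t'. (par ^^ t') 0 = j"
  using assms(2-)
proof (induction t arbitrary: i)
  case 0 then show ?case by simp
next
  case (Suc t)
  show ?case
  proof (cases "i = 0")
    case True then show ?thesis using Suc.prems by blast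
  next
    case False
    then have "par i < i" using assms(1) Suc.prems by auto
    moreover have "(par ^^ t) (par i) = j" using Suc.prems(1)
      by (simp add: funpow_Suc_right del: funpow.simps)
    ultimately show ?thesis using Suc.IH Suc.prems by auto
  qed
qed

locale random_tree_model =
  fixes V :: "nat set" and E :: "(nat \<times> nat) set" and x :: "nat \<times> nat \<Rightarrow> real"
    and m :: nat and par :: "nat \<Rightarrow> nat" and dir :: "nat \<Rightarrow> bool" and v0 :: nat
    and R :: "nat list pmf"
  assumes random_tree: "random_tree E x m par dir v0 R"
    and edges_subset: "E \<subseteq> V \<times> V" and finite_V: "finite V" and root_in_V: "v0 \<in> V"
    and par_less: "\<forall>j\<in>{1..m}. par j < j"
begin

abbreviation tr :: "nat \<Rightarrow> nat \<Rightarrow> nat \<Rightarrow> real" where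
  "tr \<equiv> tree_trans E x dir"

abbreviation Pr :: "nat list set \<Rightarrow> real" where
  "Pr \<equiv> measure_pmf.prob R"

definition nondesc :: "nat \<Rightarrow> nat set" where
  "nondesc j = {i\<in>{0..m}. \<not> descendant par j i}"

definition marg :: "nat \<Rightarrow> nat \<Rightarrow> real" where
  "marg i w = Pr {r. r ! i = w}"

lemma length_support: "r \<in> set_pmf R \<Longrightarrow> length r = m + 1"
  using random_tree unfolding random_tree_def by auto

lemma root_support:
  assumes "r \<in> set_pmf R" shows "r ! 0 = v0"
proof -
  have "Pr {r. r ! 0 = v0} = 1" using random_tree unfolding random_tree_def by auto
  then have "AE r in R. r ! 0 = v0" by (subst (asm) measure_pmf.prob_eq_1) auto
  then show ?thesis using assms by (simp add: AE_measure_pmf_iff)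
qed

lemma pmf_le_prob: "r \<in> A \<Longrightarrow> pmf R r \<le> Pr A"
  using measure_pmf.finite_measure_mono[of "{r}" A R] by (simp add: measure_pmf_single)

lemma prob_child_given_nondesc:
  assumes "j \<in> {1..m}" and "Pr {r. \<forall>i\<in>nondesc j. r ! i = a i} > 0"
  shows "Pr ({r. \<forall>i\<in>nondesc j. r ! i = a i} \<inter> {r. r ! j = w})
          = tr j (a (par j)) w * Pr {r. \<forall>i\<in>nondesc j. r ! i = a i}"
  using random_tree assms unfolding random_tree_def Let_def nondesc_def
  by (auto simp: field_simps)

lemma tr_pos_support:
  assumes r: "r \<in> set_pmf R" and j: "j \<in> {1..m}"
  shows "tr j (r ! par j) (r ! j) > 0"
proof -
  let ?B = "{r'. \<forall>i\<in>nondesc j. r' ! i = r ! i}"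
  have "0 < pmf R r" using r by (simp add: pmf_positive)
  moreover have "pmf R r \<le> Pr ?B" "pmf R r \<le> Pr (?B \<inter> {r'. r' ! j = r ! j})"
    by (simp_all add: pmf_le_prob)
  ultimately have "0 < Pr ?B" "0 < tr j (r ! par j) (r ! j) * Pr ?B"
    using prob_child_given_nondesc[OF j, of "\<lambda>i. r ! i" "r ! j"] by auto
  then show ?thesis by (simp add: zero_less_mult_iff)
qed

lemma tr_nonzero_in_V: "tr j u w \<noteq> 0 \<Longrightarrow> u \<in> V \<and> w \<in> V"
  using edges_subset unfolding tree_trans_def by (auto split: if_splits)

lemma nth_support_in_V:
  assumes r: "r \<in> set_pmf R" and i: "i \<le> m"
  shows "r ! i \<in> V"
proof (cases "i = 0")
  case True then show ?thesis using root_support[OF r] root_in_V by simp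
next
  case False
  then have "i \<in> {1..m}" using i by auto
  from tr_pos_support[OF r this] show ?thesis using tr_nonzero_in_V[of i "r ! par i" "r ! i"] by force
qed

lemma finite_support: "finite (set_pmf R)"
proof (rule finite_subset)
  show "set_pmf R \<subseteq> {r. set r \<subseteq> V \<and> length r = m + 1}"
    using nth_support_in_V length_support by (fastforce simp: in_set_conv_nth)
qed (simp add: finite_lists_length_eq finite_V)

lemma prob_eq_sum: "Pr A = (\<Sum>r\<in>set_pmf R \<inter> A. pmf R r)"
  by (metis Int_commute finite_Int finite_support measure_Int_set_pmf measure_measure_pmf_finite)

lemma prob_cong_support: "set_pmf R \<inter> A = set_pmf R \<inter> B \<Longrightarrow> Pr A = Pr B"
  by (simp add: prob_eq_sum)

(* Nothing constrains par 0, so iterating par may wrap around through the root and a vertex may be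
   its own strict descendant. For the parent this is excluded by the defining property of R,
   applied to a parent value outside V. *)
lemma parent_nondesc:
  assumes j: "j \<in> {1..m}" shows "par j \<in> nondesc j"
proof (rule ccontr)
  assume nin: "par j \<notin> nondesc j"
  obtain r where r: "r \<in> set_pmf R" using set_pmf_not_empty by fastforce
  obtain v where v: "v \<notin> V" using ex_new_if_finite[OF infinite_UNIV_nat finite_V] by blast
  define a where "a = (\<lambda>i. if i = par j then v else r ! i)"
  have B: "{r'. \<forall>i\<in>nondesc j. r' ! i = a i} = {r'. \<forall>i\<in>nondesc j. r' ! i = r ! i}"
    using nin unfolding a_def by auto
  have pos: "0 < pmf R r" using r by (simp add: pmf_positive)
  also have "pmf R r \<le> Pr {r'. \<forall>i\<in>nondesc j. r' ! i = a i}"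
    unfolding B by (simp add: pmf_le_prob)
  finally have "Pr ({r'. \<forall>i\<in>nondesc j. r' ! i = a i} \<inter> {r'. r' ! j = r ! j}) = 0"
    using prob_child_given_nondesc[OF j, of a "r ! j"] tr_nonzero_in_V[of j v "r ! j"] v
    unfolding a_def by auto
  moreover have "pmf R r \<le> Pr ({r'. \<forall>i\<in>nondesc j. r' ! i = a i} \<inter> {r'. r' ! j = r ! j})"
    unfolding B by (simp add: pmf_le_prob)
  ultimately show False using pos by simp
qed

lemma earlier_nondesc:
  assumes j: "j \<in> {1..m}" and i: "i < j" shows "i \<in> nondesc j"
proof (rule ccontr)
  assume "i \<notin> nondesc j"
  then obtain t where t: "(par ^^ t) i = j" using i j unfolding nondesc_def descendant_def by auto
  obtain t' where t': "(par ^^ t') 0 = j"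
    using funpow_par_increase_through_root[OF par_less t i] j by auto
  obtain t1 where t1: "(par ^^ t1) (par j) = 0"
    using funpow_par_reaches_root[OF par_less, of "par j"] par_less j by fastforce
  have "(par ^^ (t' + t1)) (par j) = j" by (simp add: funpow_add t1 t')
  then have "descendant par j (par j)" unfolding descendant_def by blast
  then show False using parent_nondesc[OF j] unfolding nondesc_def by auto
qed

definition determined_by_nondesc :: "nat \<Rightarrow> nat list set \<Rightarrow> bool" where
  "determined_by_nondesc j C \<longleftrightarrow> (\<forall>r\<in>set_pmf R \<inter> C. \<forall>r'\<in>set_pmf R.
     (\<forall>i\<in>nondesc j. r' ! i = r ! i) \<longrightarrow> r' \<in> C)"

lemma sum_support_by_nondesc:
  fixes h :: "nat list \<Rightarrow> real"
  assumes C: "determined_by_nondesc j C"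
  defines "restr \<equiv> \<lambda>r i. if i \<in> nondesc j then r ! i else 0"
  shows "(\<Sum>r\<in>set_pmf R \<inter> C. h r) =
    (\<Sum>a\<in>restr ` (set_pmf R \<inter> C). \<Sum>r\<in>set_pmf R \<inter> {r. \<forall>i\<in>nondesc j. r ! i = a i}. h r)"
proof -
  have "(\<Sum>r\<in>set_pmf R \<inter> C. h r) =
      (\<Sum>a\<in>restr ` (set_pmf R \<inter> C). \<Sum>r\<in>{r\<in>set_pmf R \<inter> C. restr r = a}. h r)"
    by (rule sum.group[symmetric]) (use finite_support in auto)
  also have "\<dots> = (\<Sum>a\<in>restr ` (set_pmf R \<inter> C). \<Sum>r\<in>set_pmf R \<inter> {r. \<forall>i\<in>nondesc j. r ! i = a i}. h r)"
  proof (rule sum.cong[OF refl])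
    fix a assume "a \<in> restr ` (set_pmf R \<inter> C)"
    then obtain r0 where r0: "r0 \<in> set_pmf R \<inter> C" and a: "a = restr r0" by auto
    have a_nondesc: "a i = r0 ! i" if "i \<in> nondesc j" for i
      using that unfolding a restr_def by simp
    have "restr r = a \<longleftrightarrow> (\<forall>i\<in>nondesc j. r ! i = r0 ! i)" for r
      unfolding a restr_def fun_eq_iff by auto
    moreover have "r \<in> C" if "r \<in> set_pmf R" "\<forall>i\<in>nondesc j. r ! i = r0 ! i" for r
      using C r0 that unfolding determined_by_nondesc_def by blast
    ultimately have "{r\<in>set_pmf R \<inter> C. restr r = a} = set_pmf R \<inter> {r. \<forall>i\<in>nondesc j. r ! i = a i}"
      using a_nondesc by auto
    then show "(\<Sum>r\<in>{r\<in>set_pmf R \<inter> C. restr r = a}. h r) =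
      (\<Sum>r\<in>set_pmf R \<inter> {r. \<forall>i\<in>nondesc j. r ! i = a i}. h r)" by simp
  qed
  finally show ?thesis .
qed

lemma prob_Int_child_eq:
  assumes j: "j \<in> {1..m}" and C: "determined_by_nondesc j C"
    and parent: "\<forall>r\<in>set_pmf R \<inter> C. r ! par j = u"
  shows "Pr (C \<inter> {r. r ! j = w}) = tr j u w * Pr C"
proof -
  define restr where "restr = (\<lambda>r i. if i \<in> nondesc j then r ! i else (0::nat))"
  let ?B = "\<lambda>a. {r. \<forall>i\<in>nondesc j. r ! i = a i}"
  let ?g = "\<lambda>r. if r ! j = w then pmf R r else 0"
  have "Pr (C \<inter> {r. r ! j = w}) = (\<Sum>r\<in>set_pmf R \<inter> C. ?g r)"
    unfolding prob_eq_sum by (rule sum.mono_neutral_cong_left) (use finite_support in auto)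
  also have "\<dots> = (\<Sum>a\<in>restr ` (set_pmf R \<inter> C). \<Sum>r\<in>set_pmf R \<inter> ?B a. ?g r)"
    unfolding restr_def by (rule sum_support_by_nondesc[OF C])
  also have "\<dots> = (\<Sum>a\<in>restr ` (set_pmf R \<inter> C). tr j u w * Pr (?B a))"
  proof (rule sum.cong[OF refl])
    fix a assume "a \<in> restr ` (set_pmf R \<inter> C)"
    then obtain r0 where r0: "r0 \<in> set_pmf R" "r0 \<in> C" and a: "a = restr r0" by auto
    have "pmf R r0 \<le> Pr (?B a)" unfolding a restr_def by (rule pmf_le_prob) simp
    then have pos: "Pr (?B a) > 0" using pmf_positive[OF r0(1)] by linarith
    have "a (par j) = u" using parent_nondesc[OF j] parent r0 unfolding a restr_def by auto
    moreover have "(\<Sum>r\<in>set_pmf R \<inter> ?B a. ?g r) = Pr (?B a \<inter> {r. r ! j = w})"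
      unfolding prob_eq_sum by (rule sum.mono_neutral_cong_right) (use finite_support in auto)
    ultimately show "(\<Sum>r\<in>set_pmf R \<inter> ?B a. ?g r) = tr j u w * Pr (?B a)"
      using prob_child_given_nondesc[OF j pos, of w] by simp
  qed
  also have "\<dots> = tr j u w * (\<Sum>a\<in>restr ` (set_pmf R \<inter> C). \<Sum>r\<in>set_pmf R \<inter> ?B a. pmf R r)"
    by (simp add: prob_eq_sum sum_distrib_left)
  also have "(\<Sum>a\<in>restr ` (set_pmf R \<inter> C). \<Sum>r\<in>set_pmf R \<inter> ?B a. pmf R r) = Pr C"
    unfolding prob_eq_sum restr_def by (rule sum_support_by_nondesc[OF C, symmetric])
  finally show ?thesis .
qed

lemma prob_prefix:
  assumes r: "r \<in> set_pmf R" and k: "1 \<le> k" "k \<le> m + 1"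
  shows "Pr {r'. take k r' = take k r} = (\<Prod>i\<in>{1..<k}. tr i (r ! par i) (r ! i))"
  using k
proof (induction k)
  case 0 then show ?case by simp
next
  case (Suc k)
  show ?case
  proof (cases "k = 0")
    case True
    have "take 1 r' = [v0]" if "r' \<in> set_pmf R" for r'
      using length_support[OF that] root_support[OF that] by (cases r') auto
    then have "set_pmf R \<inter> {r'. take (Suc k) r' = take (Suc k) r} = set_pmf R \<inter> UNIV"
      using True r by auto
    then have "Pr {r'. take (Suc k) r' = take (Suc k) r} = Pr UNIV" by (rule prob_cong_support)
    then show ?thesis using True by simp
  next
    case False
    then have k: "k \<in> {1..m}" using Suc.prems by auto
    let ?C = "{r'. take k r' = take k r}"
    have "take (Suc k) r' = take k r' @ [r' ! k]" if "r' \<in> set_pmf R" for r'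
      using length_support[OF that] k by (simp add: take_Suc_conv_app_nth)
    then have "set_pmf R \<inter> {r'. take (Suc k) r' = take (Suc k) r} = set_pmf R \<inter> (?C \<inter> {r'. r' ! k = r ! k})"
      using r by auto
    then have "Pr {r'. take (Suc k) r' = take (Suc k) r} = Pr (?C \<inter> {r'. r' ! k = r ! k})"
      by (rule prob_cong_support)
    also have "\<dots> = tr k (r ! par k) (r ! k) * Pr ?C"
    proof (rule prob_Int_child_eq[OF k])
      show "determined_by_nondesc k ?C"
        unfolding determined_by_nondesc_def
      proof (intro ballI impI)
        fix r1 r' assume r1: "r1 \<in> set_pmf R \<inter> ?C" and r': "r' \<in> set_pmf R"
          and agree: "\<forall>i\<in>nondesc k. r' ! i = r1 ! i"
        have "take k r' = take k r1"
          by (rule nth_take_lemma) (use length_support r1 r' k agree earlier_nondesc[OF k] in auto)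
        then show "r' \<in> ?C" using r1 by simp
      qed
      have "par k < k" using par_less k by blast
      then show "\<forall>r1\<in>set_pmf R \<inter> ?C. r1 ! par k = r ! par k"
        by (metis (mono_tags) Int_iff mem_Collect_eq nth_take)
    qed
    also have "\<dots> = (\<Prod>i\<in>{1..<Suc k}. tr i (r ! par i) (r ! i))"
      using Suc.IH k by (simp add: prod.op_ivl_Suc)
    finally show ?thesis .
  qed
qed

lemma pmf_eq_prod_tr:
  assumes r: "r \<in> set_pmf R"
  shows "pmf R r = (\<Prod>i\<in>{1..m}. tr i (r ! par i) (r ! i))"
proof -
  have "set_pmf R \<inter> {r'. take (m + 1) r' = take (m + 1) r} = set_pmf R \<inter> {r}"
    using length_support r by auto
  then have "Pr {r'. take (m + 1) r' = take (m + 1) r} = pmf R r"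
    using prob_cong_support[of "{r'. take (m+1) r' = take (m+1) r}" "{r}"] r
    by (simp add: prob_eq_sum)
  moreover have "{1..<m + 1} = {1..m}" by auto
  ultimately show ?thesis using prob_prefix[OF r, of "m + 1"] by simp
qed

lemma entropy2_eq_sum_edges:
  "entropy2 R = (\<Sum>k\<in>{1..m}. \<Sum>r\<in>set_pmf R. pmf R r * - log 2 (tr k (r ! par k) (r ! k)))"
proof -
  have "log 2 (pmf R r) = (\<Sum>k\<in>{1..m}. log 2 (tr k (r ! par k) (r ! k)))" if r: "r \<in> set_pmf R" for r
  proof -
    have "ln (pmf R r) = (\<Sum>k\<in>{1..m}. ln (tr k (r ! par k) (r ! k)))"
      unfolding pmf_eq_prod_tr[OF r]
      by (rule ln_prod) (use tr_pos_support[OF r] in \<open>auto simp: less_imp_neq[symmetric]\<close>)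
    then show ?thesis by (simp add: log_def sum_divide_distrib)
  qed
  then have "entropy2 R = (\<Sum>r\<in>set_pmf R. \<Sum>k\<in>{1..m}. pmf R r * - log 2 (tr k (r ! par k) (r ! k)))"
    unfolding entropy2_def by (simp add: sum_distrib_left sum_negf flip: sum_negf)
  then show ?thesis by (simp add: sum.swap[of _ "set_pmf R"])
qed

lemma expectation_edge:
  assumes k: "k \<in> {1..m}"
  shows "(\<Sum>r\<in>set_pmf R. pmf R r * \<phi> (r ! par k) (r ! k)) =
    (\<Sum>u\<in>V. marg (par k) u * (\<Sum>w\<in>V. tr k u w * \<phi> u w))"
proof -
  have pk: "par k \<le> m" "k \<le> m" using par_less k by fastforce+
  let ?h = "\<lambda>r. pmf R r * \<phi> (r ! par k) (r ! k)"
  let ?S = "\<lambda>u w. {r\<in>{r\<in>set_pmf R. r ! par k = u}. r ! k = w}"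
  have "(\<Sum>r\<in>set_pmf R. ?h r) = (\<Sum>u\<in>V. \<Sum>r\<in>{r\<in>set_pmf R. r ! par k = u}. ?h r)"
    by (rule sum.group[symmetric]) (use finite_support finite_V nth_support_in_V pk in auto)
  also have "\<dots> = (\<Sum>u\<in>V. \<Sum>w\<in>V. \<Sum>r\<in>?S u w. ?h r)"
    by (intro sum.cong refl, rule sum.group[symmetric])
      (use finite_support finite_V nth_support_in_V pk in auto)
  also have "\<dots> = (\<Sum>u\<in>V. \<Sum>w\<in>V. \<phi> u w * (tr k u w * marg (par k) u))"
  proof (intro sum.cong refl)
    fix u w
    have "(\<Sum>r\<in>?S u w. ?h r) = \<phi> u w * Pr ({r. r ! par k = u} \<inter> {r. r ! k = w})"
      unfolding prob_eq_sum sum_distrib_left by (rule sum.cong) auto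
    also have "Pr ({r. r ! par k = u} \<inter> {r. r ! k = w}) = tr k u w * marg (par k) u"
      unfolding marg_def
      by (rule prob_Int_child_eq[OF k]) (use parent_nondesc[OF k] in \<open>auto simp: determined_by_nondesc_def\<close>)
    finally show "(\<Sum>r\<in>?S u w. ?h r) = \<phi> u w * (tr k u w * marg (par k) u)" .
  qed
  also have "\<dots> = (\<Sum>u\<in>V. marg (par k) u * (\<Sum>w\<in>V. tr k u w * \<phi> u w))"
    by (simp add: sum_distrib_left mult_ac)
  finally show ?thesis .
qed

definition row_entropy :: "nat \<Rightarrow> nat \<Rightarrow> real" where
  "row_entropy k u = (\<Sum>w\<in>V. tr k u w * - log 2 (tr k u w))"

lemma entropy2_eq_sum_row_entropy:
  "entropy2 R = (\<Sum>k\<in>{1..m}. \<Sum>u\<in>V. marg (par k) u * row_entropy k u)"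
  unfolding entropy2_eq_sum_edges row_entropy_def by (intro sum.cong refl expectation_edge)

lemma marg_nonneg: "marg i w \<ge> 0"
  unfolding marg_def by simp

lemma sum_marg:
  assumes i: "i \<le> m" shows "(\<Sum>u\<in>V. marg i u) = 1"
proof -
  have "(\<Sum>u\<in>V. marg i u) = (\<Sum>u\<in>V. \<Sum>r\<in>{r\<in>set_pmf R. r ! i = u}. pmf R r)"
    unfolding marg_def prob_eq_sum by (intro sum.cong) auto
  also have "\<dots> = (\<Sum>r\<in>set_pmf R. pmf R r)"
    by (rule sum.group) (use finite_support finite_V nth_support_in_V i in auto)
  also have "\<dots> = 1" using prob_eq_sum[of UNIV] by simp
  finally show ?thesis .
qed

lemma marg_child:
  assumes k: "k \<in> {1..m}" and w: "w \<in> V"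
  shows "marg k w = (\<Sum>u\<in>V. marg (par k) u * tr k u w)"
proof -
  have "marg k w = (\<Sum>r\<in>set_pmf R. pmf R r * (\<lambda>u w'. if w' = w then 1 else 0) (r ! par k) (r ! k))"
    unfolding marg_def prob_eq_sum by (rule sum.mono_neutral_cong_left) (use finite_support in auto)
  also have "\<dots> = (\<Sum>u\<in>V. marg (par k) u * (\<Sum>w'\<in>V. tr k u w' * (if w' = w then 1 else 0)))"
    by (rule expectation_edge[OF k])
  also have "\<dots> = (\<Sum>u\<in>V. marg (par k) u * tr k u w)"
    using w finite_V by (simp add: if_distrib cong: if_cong)
  finally show ?thesis .
qed

end

lemma card_shallow_le:
  assumes "\<Delta> \<ge> 1" "real (tree_maxdeg m par) \<le> \<Delta>"
  shows "real (card ({1..m} \<inter> (\<Union>d\<in>{..D+1}. tree_level m par d))) \<le> (real D + 2) * \<Delta> ^ (D + 1)"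
proof -
  have "card ({1..m} \<inter> (\<Union>d\<in>{..D+1}. tree_level m par d)) \<le> card (\<Union>d\<in>{..D+1}. tree_level m par d)"
    by (rule card_mono) (auto intro: finite_subset[OF tree_level_subset])
  also have "\<dots> \<le> (\<Sum>d\<in>{..D+1}. card (tree_level m par d))" by (rule card_UN_le) simp
  finally have "real (card ({1..m} \<inter> (\<Union>d\<in>{..D+1}. tree_level m par d)))
      \<le> (\<Sum>d\<in>{..D+1}. real (card (tree_level m par d)))"
    by (metis of_nat_le_iff of_nat_sum)
  also have "\<dots> \<le> (\<Sum>d\<in>{..D+1}. \<Delta> ^ (D + 1))"
  proof (rule sum_mono)
    fix d assume "d \<in> {..D+1}"
    then have "\<Delta> ^ d \<le> \<Delta> ^ (D + 1)" using assms by (intro power_increasing) auto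
    then show "real (card (tree_level m par d)) \<le> \<Delta> ^ (D + 1)"
      using card_tree_level_le[OF assms, of d] by linarith
  qed
  also have "\<dots> = (real D + 2) * \<Delta> ^ (D + 1)" by simp
  finally show ?thesis .
qed

locale random_tree_in_dense_digraph = random_tree_model +
  fixes n :: nat and b \<epsilon> :: real
  assumes dense: "n_eps_digraph n \<epsilon> V E" and matching: "perfect_frac_matching V E x"
    and normal: "b_normal b n E x" and b_ge_2: "b \<ge> 2" and eps_pos: "\<epsilon> > 0"
begin

lemma card_V: "card V = n"
  using dense unfolding n_eps_digraph_def by auto

lemma n_pos: "n > 0"
  using card_V root_in_V finite_V by (metis card_gt_0_iff empty_iff)

lemma x_lower: "e \<in> E \<Longrightarrow> 1 / (b * n) \<le> x e"
  and x_upper: "e \<in> E \<Longrightarrow> x e \<le> b / n"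
  using normal unfolding b_normal_def by auto

lemma x_nonneg: "e \<in> E \<Longrightarrow> 0 \<le> x e"
  using matching unfolding perfect_frac_matching_def by auto

lemma tr_nonneg: "0 \<le> tr k u w"
  unfolding tree_trans_def using x_nonneg by auto

lemma tr_le: "tr k u w \<le> b / n"
  unfolding tree_trans_def using x_upper b_ge_2 by auto

lemma sum_tr_parent:
  assumes w: "w \<in> V" shows "(\<Sum>u\<in>V. tr k u w) = 1"
proof (cases "dir k")
  case True
  have "(\<Sum>u\<in>V. tr k u w) = (\<Sum>u\<in>in_nbrs V E w. x (u, w))"
    unfolding tree_trans_def in_nbrs_def using True by (simp add: sum.inter_filter finite_V)
  also have "\<dots> = 1" using matching w unfolding perfect_frac_matching_def by auto
  finally show ?thesis .
next
  case False
  have "(\<Sum>u\<in>V. tr k u w) = (\<Sum>u\<in>out_nbrs V E w. x (w, u))"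
    unfolding tree_trans_def out_nbrs_def using False by (simp add: sum.inter_filter finite_V)
  also have "\<dots> = 1" using matching w unfolding perfect_frac_matching_def by auto
  finally show ?thesis .
qed

lemma tr_le_1: "tr k u w \<le> 1"
proof (cases "w \<in> V \<and> u \<in> V")
  case True
  then have "tr k u w \<le> (\<Sum>u\<in>V. tr k u w)"
    using finite_V by (intro member_le_sum) (auto simp: tr_nonneg)
  then show ?thesis using sum_tr_parent True by simp
next
  case False
  then show ?thesis using tr_nonzero_in_V[of k u w] by fastforce
qed

lemma card_heavy_parents:
  assumes w: "w \<in> V"
  shows "(1/2 + \<epsilon>) * n \<le> real (card {u\<in>V. 1 / (b * n) \<le> tr k u w})"
proof -
  let ?N = "if dir k then in_nbrs V E w else out_nbrs V E w"
  have "(1/2 + \<epsilon>) * n \<le> real (card ?N)"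
    using dense w unfolding n_eps_digraph_def by auto
  moreover have "?N \<subseteq> {u\<in>V. 1 / (b * n) \<le> tr k u w}"
    unfolding in_nbrs_def out_nbrs_def tree_trans_def using x_lower by auto
  then have "card ?N \<le> card {u\<in>V. 1 / (b * n) \<le> tr k u w}"
    by (rule card_mono[rotated]) (simp add: finite_V)
  ultimately show ?thesis by linarith
qed

lemma sum_min_tr_ge:
  assumes w: "w \<in> V" and w': "w' \<in> V"
  shows "2 * \<epsilon> / b \<le> (\<Sum>u\<in>V. min (tr k u w) (tr k u w'))"
proof -
  define A where "A = {u\<in>V. 1 / (b * n) \<le> tr k u w}"
  define A' where "A' = {u\<in>V. 1 / (b * n) \<le> tr k u w'}"
  have fin: "finite A" "finite A'" unfolding A_def A'_def using finite_V by auto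
  have "card (A \<union> A') \<le> card V" by (rule card_mono[OF finite_V]) (auto simp: A_def A'_def)
  then have "real (card A) + real (card A') \<le> n + real (card (A \<inter> A'))"
    using card_Un_Int[OF fin] card_V by simp
  moreover have "(1/2 + \<epsilon>) * n \<le> real (card A)" "(1/2 + \<epsilon>) * n \<le> real (card A')"
    unfolding A_def A'_def using card_heavy_parents w w' by auto
  ultimately have "2 * \<epsilon> * n \<le> real (card (A \<inter> A'))" by (simp add: algebra_simps)
  then have "2 * \<epsilon> / b \<le> real (card (A \<inter> A')) / (b * n)"
    using n_pos b_ge_2 by (simp add: field_simps)
  also have "\<dots> = (\<Sum>u\<in>A \<inter> A'. 1 / (b * n))" by simp
  also have "\<dots> \<le> (\<Sum>u\<in>A \<inter> A'. min (tr k u w) (tr k u w'))"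
    by (rule sum_mono) (auto simp: A_def A'_def)
  also have "\<dots> \<le> (\<Sum>u\<in>V. min (tr k u w) (tr k u w'))"
    by (rule sum_mono2[OF finite_V]) (auto simp: A_def tr_nonneg)
  finally show ?thesis .
qed

lemma marg_oscillation_le:
  "j \<in> tree_level m par (Suc d) \<Longrightarrow>
    \<forall>u\<in>V. \<forall>w\<in>V. marg j u - marg j w \<le> b / n * (1 - 2 * \<epsilon> / b) ^ d"
proof (induction d arbitrary: j)
  case 0
  then have j: "j \<in> {1..m}" by auto
  then have "par j \<le> m" using par_less by fastforce
  show ?case
  proof (intro ballI)
    fix u w assume u: "u \<in> V" and w: "w \<in> V"
    have "marg j u = (\<Sum>v\<in>V. marg (par j) v * tr j v u)" by (rule marg_child[OF j u])
    also have "\<dots> \<le> (\<Sum>v\<in>V. marg (par j) v * (b / n))"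
      by (intro sum_mono mult_left_mono) (auto simp: tr_le marg_nonneg)
    also have "\<dots> = (\<Sum>v\<in>V. marg (par j) v) * (b / n)" by (rule sum_distrib_right[symmetric])
    also have "\<dots> = b / n" using sum_marg[OF \<open>par j \<le> m\<close>] by simp
    finally show "marg j u - marg j w \<le> b / n * (1 - 2 * \<epsilon> / b) ^ 0" using marg_nonneg[of j w] by simp
  qed
next
  case (Suc d)
  then have j: "j \<in> {1..m}" and "par j \<in> tree_level m par (Suc d)" by auto
  then have IH: "\<forall>u\<in>V. \<forall>w\<in>V. marg (par j) u - marg (par j) w \<le> b / n * (1 - 2 * \<epsilon> / b) ^ d"
    using Suc.IH by blast
  show ?case
  proof (intro ballI)
    fix u w assume u: "u \<in> V" and w: "w \<in> V"
    have "marg j u - marg j w = (\<Sum>v\<in>V. marg (par j) v * tr j v u) - (\<Sum>v\<in>V. marg (par j) v * tr j v w)"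
      using marg_child[OF j u] marg_child[OF j w] by simp
    also have "\<dots> \<le> b / n * (1 - 2 * \<epsilon> / b) ^ d * (1 - 2 * \<epsilon> / b)"
      by (rule oscillation_contraction[OF finite_V IH]) (auto simp: sum_tr_parent u w sum_min_tr_ge)
    finally show "marg j u - marg j w \<le> b / n * (1 - 2 * \<epsilon> / b) ^ Suc d" by (simp add: mult_ac)
  qed
qed

lemma marg_ge:
  assumes i: "i \<le> m" and osc: "\<forall>u\<in>V. \<forall>w\<in>V. marg i u - marg i w \<le> Osc" and u: "u \<in> V"
  shows "1 / n - Osc \<le> marg i u"
proof -
  have "Max (marg i ` V) \<in> marg i ` V" using finite_V root_in_V by (intro Max_in) auto
  then obtain a where a: "a \<in> V" "Max (marg i ` V) = marg i a" by blast
  then have a_max: "\<forall>v\<in>V. marg i v \<le> marg i a" using finite_V by (auto simp flip: a(2))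
  have "1 = (\<Sum>v\<in>V. marg i v)" using sum_marg[OF i] by simp
  also have "\<dots> \<le> n * marg i a" using sum_bounded_above[of V "marg i" "marg i a"] a_max card_V by simp
  finally have "1 / n \<le> marg i a" using n_pos by (simp add: field_simps)
  then show ?thesis using osc u a a_max by fastforce
qed

lemma row_entropy_nonneg: "0 \<le> row_entropy k u"
  unfolding row_entropy_def
proof (intro sum_nonneg)
  fix w
  show "0 \<le> tr k u w * - log 2 (tr k u w)"
  proof (cases "tr k u w = 0")
    case False
    then have "0 < tr k u w" using tr_nonneg[of k u w] by linarith
    then show ?thesis using tr_le_1 by (simp add: mult_nonneg_nonpos)
  qed simp
qed

lemma sum_row_entropy: "(\<Sum>u\<in>V. row_entropy k u) = h_frac E x"
proof -
  let ?f = "\<lambda>e. if e \<in> E then x e * - log 2 (x e) else 0"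
  have "{e \<in> V \<times> V. e \<in> E} = E" using edges_subset by auto
  then have "(\<Sum>e\<in>V \<times> V. ?f e) = (\<Sum>e\<in>E. x e * - log 2 (x e))"
    using finite_V by (simp add: sum.inter_filter[symmetric])
  also have "\<dots> = h_frac E x"
    unfolding h_frac_def by (simp add: log_inverse flip: inverse_eq_divide)
  finally have "h_frac E x = (\<Sum>e\<in>V \<times> V. ?f e)" ..
  also have "\<dots> = (\<Sum>u\<in>V. row_entropy k u)"
  proof (cases "dir k")
    case True
    have "(\<Sum>u\<in>V. row_entropy k u) = (\<Sum>u\<in>V. \<Sum>w\<in>V. ?f (u, w))"
      unfolding row_entropy_def tree_trans_def using True by (intro sum.cong refl) auto
    then show ?thesis by (simp add: sum.cartesian_product)
  next
    case False
    have "(\<Sum>u\<in>V. row_entropy k u) = (\<Sum>u\<in>V. \<Sum>w\<in>V. ?f (w, u))"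
      unfolding row_entropy_def tree_trans_def using False by (intro sum.cong refl) auto
    also have "\<dots> = (\<Sum>w\<in>V. \<Sum>u\<in>V. ?f (w, u))" by (rule sum.swap)
    finally show ?thesis by (simp add: sum.cartesian_product)
  qed
  finally show ?thesis by simp
qed

lemma h_frac_nonneg: "0 \<le> h_frac E x"
  using sum_row_entropy[of 0] row_entropy_nonneg by (metis sum_nonneg)

lemma edge_entropy_ge:
  assumes k: "k \<in> {1..m}" and pk: "par k \<in> tree_level m par (Suc d)"
  shows "h_frac E x / n * (1 - b * (1 - 2 * \<epsilon> / b) ^ d) \<le> (\<Sum>u\<in>V. marg (par k) u * row_entropy k u)"
proof -
  let ?lb = "1 / n - b / n * (1 - 2 * \<epsilon> / b) ^ d"
  have "par k \<le> m" using par_less k by fastforce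
  then have "?lb \<le> marg (par k) u" if "u \<in> V" for u
    by (rule marg_ge[OF _ marg_oscillation_le[OF pk] that])
  then have "(\<Sum>u\<in>V. ?lb * row_entropy k u) \<le> (\<Sum>u\<in>V. marg (par k) u * row_entropy k u)"
    by (intro sum_mono mult_right_mono row_entropy_nonneg)
  moreover have "(\<Sum>u\<in>V. ?lb * row_entropy k u) = ?lb * h_frac E x"
    by (simp add: sum_distrib_left[symmetric] sum_row_entropy)
  moreover have "?lb * h_frac E x = h_frac E x / n * (1 - b * (1 - 2 * \<epsilon> / b) ^ d)"
    using n_pos by (simp add: field_simps)
  ultimately show ?thesis by simp
qed

lemma entropy2_ge_deep_edges:
  assumes \<Delta>: "\<Delta> \<ge> 1" "real (tree_maxdeg m par) \<le> \<Delta>" and eps_le_1: "\<epsilon> \<le> 1"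
    and decay: "b * (1 - 2 * \<epsilon> / b) ^ D \<le> 1"
  shows "(real m - (real D + 2) * \<Delta> ^ (D + 1)) * (h_frac E x / n * (1 - b * (1 - 2 * \<epsilon> / b) ^ D))
    \<le> entropy2 R"
proof -
  define Y where "Y = h_frac E x / n * (1 - b * (1 - 2 * \<epsilon> / b) ^ D)"
  define edge where "edge = (\<lambda>k. \<Sum>u\<in>V. marg (par k) u * row_entropy k u)"
  define Deep where "Deep = {1..m} - (\<Union>d\<in>{..D+1}. tree_level m par d)"
  have Y_nonneg: "0 \<le> Y" unfolding Y_def using h_frac_nonneg decay by simp
  have deep: "Y \<le> edge k" if k: "k \<in> Deep" for k
  proof -
    have k1: "k \<in> {1..m}" using k unfolding Deep_def by auto
    then obtain e where e: "k \<in> tree_level m par e" using tree_level_exists[OF par_less] by force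
    have "D + 1 < e" using e k unfolding Deep_def by force
    define d where "d = e - 2"
    have "e = Suc (Suc d)" "D \<le> d" unfolding d_def using \<open>D + 1 < e\<close> by arith+
    then have d: "par k \<in> tree_level m par (Suc d)" "D \<le> d" using e by auto
    have "(1 - 2 * \<epsilon> / b) ^ d \<le> (1 - 2 * \<epsilon> / b) ^ D"
      using d b_ge_2 eps_le_1 eps_pos by (intro power_decreasing) (auto simp: field_simps)
    then have "Y \<le> h_frac E x / n * (1 - b * (1 - 2 * \<epsilon> / b) ^ d)"
      unfolding Y_def using h_frac_nonneg b_ge_2 by (intro mult_left_mono) auto
    also have "\<dots> \<le> edge k" unfolding edge_def by (rule edge_entropy_ge[OF k1 d(1)])
    finally show ?thesis .
  qed
  have "{1..m} - Deep = {1..m} \<inter> (\<Union>d\<in>{..D+1}. tree_level m par d)" unfolding Deep_def by auto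
  then have "real (card ({1..m} - Deep)) \<le> (real D + 2) * \<Delta> ^ (D + 1)"
    using card_shallow_le[OF \<Delta>] by simp
  moreover have Deep_sub: "Deep \<subseteq> {1..m}" unfolding Deep_def by auto
  then have "real (card ({1..m} - Deep)) = real m - real (card Deep)"
    using card_mono[of "{1..m}" Deep] finite_subset[OF Deep_sub]
    by (simp add: card_Diff_subset of_nat_diff)
  ultimately have card_Deep: "real m - (real D + 2) * \<Delta> ^ (D + 1) \<le> real (card Deep)"
    by linarith
  have "(real m - (real D + 2) * \<Delta> ^ (D + 1)) * Y \<le> real (card Deep) * Y"
    using card_Deep Y_nonneg by (rule mult_right_mono)
  also have "\<dots> = (\<Sum>k\<in>Deep. Y)" by simp
  also have "\<dots> \<le> (\<Sum>k\<in>Deep. edge k)" using deep by (rule sum_mono)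
  also have "\<dots> \<le> (\<Sum>k\<in>{1..m}. edge k)"
  proof (rule sum_mono2[OF _ Deep_sub])
    show "0 \<le> edge k" for k
      unfolding edge_def by (intro sum_nonneg mult_nonneg_nonneg marg_nonneg row_entropy_nonneg)
  qed simp
  also have "\<dots> = entropy2 R" unfolding edge_def by (rule entropy2_eq_sum_row_entropy[symmetric])
  finally show ?thesis unfolding Y_def .
qed

end

lemma mult_ge_one_minus_double:
  fixes m t A B :: real
  assumes "0 \<le> m" "0 \<le> t" "t \<le> 1" "m * (1 - t) \<le> A" "1 - t \<le> B"
  shows "m * (1 - 2 * t) \<le> A * B"
proof -
  have "0 \<le> m * (1 - t)" using assms by simp
  then have "0 \<le> A" using assms(4) by linarith
  have "m * (1 - 2 * t) \<le> m * (1 - t) * (1 - t)"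
    using assms(1) by (simp add: algebra_simps)
  also have "\<dots> \<le> A * B" using assms \<open>0 \<le> A\<close> by (intro mult_mono) auto
  finally show ?thesis .
qed

lemma sqrt_ln_ge:
  assumes "0 \<le> t" "exp (t\<^sup>2) \<le> y"
  shows "t \<le> sqrt (ln y)"
proof -
  have "0 < y" using assms(2) by (rule less_le_trans[OF exp_gt_zero])
  then have "t\<^sup>2 \<le> ln y" using assms(2) by (simp add: ln_ge_iff)
  then show ?thesis using assms(1) real_le_rsqrt by blast
qed

lemma entropy2_random_tree_ge:
  fixes \<epsilon> b \<gamma> :: real
  defines "c \<equiv> 2 * \<epsilon> / b"
  assumes \<epsilon>: "0 < \<epsilon>" "\<epsilon> \<le> 1" and b: "2 \<le> b" and \<gamma>: "0 < \<gamma>" "\<gamma> \<le> c / 16"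
    and n: "exp ((16 / 3 * (4 + 1 / c + (ln b + 3) / 16 + ln b / c))\<^sup>2) \<le> real n"
    and dense: "n_eps_digraph n \<epsilon> V E" and matching: "perfect_frac_matching V E x"
    and normal: "b_normal b n E x" and root: "v0 \<in> V" and bfs: "bfs_tree m par"
    and m: "real n powr (1/4) + 1 \<le> real (m + 1)"
    and maxdeg: "real (tree_maxdeg m par) \<le> exp (\<gamma> * sqrt (ln (real n)))"
    and random_tree: "random_tree E x m par dir v0 R"
  shows "(1 - 2 * exp (- sqrt (ln (real n)))) * (real m / real n) * h_frac E x \<le> entropy2 R"
proof -
  interpret random_tree_in_dense_digraph V E x m par dir v0 R n b \<epsilon>
    using dense matching normal root bfs random_tree b \<epsilon>
    by unfold_locales (auto simp: n_eps_digraph_def digraph_def bfs_tree_def)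
  define s where "s = sqrt (ln (real n))"
  define t where "t = exp (- s)"
  have c: "0 < c" "c \<le> 1" unfolding c_def using \<epsilon> b by (auto simp: field_simps)
  have s: "16 / 3 * (4 + 1 / c + (ln b + 3) / 16 + ln b / c) \<le> s"
    unfolding s_def using c b by (intro sqrt_ln_ge[OF _ n]) (auto intro!: add_nonneg_nonneg)
  have "1 \<le> b" "0 \<le> \<gamma>" using b \<gamma> by auto
  then obtain D where decay: "b * (1 - c) ^ D \<le> t"
    and few: "(real D + 2) * exp (\<gamma> * s) ^ (D + 1) \<le> exp (s * s / 4 - s)"
    using exists_depth[OF c _ _ \<gamma>(2) s] unfolding t_def by blast
  have "0 \<le> s" unfolding s_def using n_pos by simp
  then have t: "0 < t" "t \<le> 1" unfolding t_def by auto
  note few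
  also have "exp (s * s / 4 - s) = real n powr (1/4) * t"
    unfolding s_def t_def using n_pos by (simp add: powr_def flip: exp_add)
  also have "\<dots> \<le> real m * t" using m t by (intro mult_right_mono) auto
  finally have shallow: "(real D + 2) * exp (\<gamma> * s) ^ (D + 1) \<le> real m * t" .
  have "real m * (1 - 2 * t) \<le> (real m - (real D + 2) * exp (\<gamma> * s) ^ (D + 1)) * (1 - b * (1 - c) ^ D)"
    by (rule mult_ge_one_minus_double) (use t shallow decay in \<open>auto simp: algebra_simps\<close>)
  then have "real m * (1 - 2 * t) * (h_frac E x / n)
      \<le> (real m - (real D + 2) * exp (\<gamma> * s) ^ (D + 1)) * (1 - b * (1 - c) ^ D) * (h_frac E x / n)"
    using h_frac_nonneg by (intro mult_right_mono) auto
  also have "\<dots> = (real m - (real D + 2) * exp (\<gamma> * s) ^ (D + 1)) * (h_frac E x / n * (1 - b * (1 - c) ^ D))"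
    by (simp add: mult_ac)
  also have "\<dots> \<le> entropy2 R"
    using \<epsilon> \<gamma> maxdeg decay t \<open>0 \<le> s\<close> unfolding s_def c_def by (intro entropy2_ge_deep_edges) auto
  finally show ?thesis unfolding t_def s_def by (simp add: mult_ac)
qed

theorem theorem6p2:
  "\<forall>\<epsilon>::real. 0 < \<epsilon> \<and> \<epsilon> \<le> 1 \<longrightarrow>
    (\<exists>b0::real. \<forall>b\<ge>b0. \<exists>\<gamma>0::real. \<gamma>0 > 0 \<and>
      (\<forall>\<gamma>. 0 < \<gamma> \<and> \<gamma> \<le> \<gamma>0 \<longrightarrow>
        (\<exists>n0::nat. \<forall>n\<ge>n0.
          \<forall>V E (x :: nat \<times> nat \<Rightarrow> real) v0 m par dir (R :: nat list pmf).
            let \<Delta> = exp (\<gamma> * sqrt (ln (real n))) in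
            n_eps_digraph n \<epsilon> V E \<longrightarrow>
            perfect_frac_matching V E x \<longrightarrow> b_normal b n E x \<longrightarrow>
            v0 \<in> V \<longrightarrow>
            bfs_tree m par \<longrightarrow>
            real n powr (1/4) + 1 \<le> real (m + 1) \<longrightarrow>
            real (m + 1) \<le> 3 * \<Delta> * real n powr (1/4) \<longrightarrow>
            real (tree_maxdeg m par) \<le> \<Delta> \<longrightarrow>
            random_tree E x m par dir v0 R \<longrightarrow>
            entropy2 R \<ge> (1 - 2 * exp (- sqrt (ln (real n)))) * (real m / real n) * h_frac E x)))"
  unfolding Let_def
  apply (intro allI impI)
  apply (rule exI[of _ 2])
  apply (intro allI impI)
  subgoal for \<epsilon> b
    apply (rule exI[of _ "2 * \<epsilon> / b / 16"])
    apply (intro conjI allI impI)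
     apply simp
    apply (rule exI[of _ "nat \<lceil>exp ((16 / 3 * (4 + 1 / (2 * \<epsilon> / b) + (ln b + 3) / 16
        + ln b / (2 * \<epsilon> / b)))\<^sup>2)\<rceil>"])
    apply (intro allI impI, elim conjE)
    apply (rule entropy2_random_tree_ge; (assumption | simp only: nat_ceiling_le_eq[symmetric]))
    done
  done

end
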